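(* Let $H$ be an abelian subgroup of $\operatorname{Sym}_n$ such that $(1,2,\dots,n)\notin H$, and let $S=S_n(H)$. (i) If $H_n=\{\mathrm{id}\}$ and $w\in\mathrm{FM}_n$ is such that $\pi(wx_ix_j)\in Sz$ for some $1\leq i,j\leq n$, then $x_ix_j\in A$. (ii) If $H_1=\{\mathrm{id}\}$ and $v\in\mathrm{FM}_n$ is such that $\pi(x_ix_jv)\in zS$ for some $1\leq i,j\leq n$, then $x_ix_j\in\tilde A$.
   Context: $S_n(H)$ is the monoid with presentation $\langle a_1,\dots,a_n \mid a_1\cdots a_n = a_{\sigma(1)}\cdots a_{\sigma(n)},\ \sigma\in H\rangle$, and $z=a_1a_2\cdots a_n\in S$. $\mathrm{FM}_n=\langle x_1,\dots,x_n\rangle$ is the free monoid of rank $n$ and $\pi:\mathrm{FM}_n\to S$ is the monoid morphism with $\pi(x_i)=a_i$. $H_i=\{\sigma\in H\mid\sigma(i)=i\}$. $A=\{x_{\sigma(n-1)}x_{\sigma(n)}\mid\sigma\in H\}$ and $\tilde A=\{x_{\sigma(1)}x_{\sigma(2)}\mid\sigma\in H\}$, subsets of $\mathrm{FM}_n$. *)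

theory Defs
  imports "HOL-Algebra.Sym_Groups"
begin

text \<open>Words of the free monoid FM_n are lists over the alphabet {1..n};
  the letter i stands for the generator x_i.\<close>

definition zword :: "nat \<Rightarrow> nat list" where
  "zword n = [1..<Suc n]"

definition perm_word :: "nat \<Rightarrow> (nat \<Rightarrow> nat) \<Rightarrow> nat list" where
  "perm_word n \<sigma> = map \<sigma> [1..<Suc n]"

text \<open>The congruence on words generated by the defining relations of S_n(H):
  pi(u) = pi(v) iff Sn_eq n H u v.\<close>
inductive Sn_eq :: "nat \<Rightarrow> (nat \<Rightarrow> nat) set \<Rightarrow> nat list \<Rightarrow> nat list \<Rightarrow> bool"
  for n :: nat and H :: "(nat \<Rightarrow> nat) set" where
  rel: "\<sigma> \<in> H \<Longrightarrow> Sn_eq n H (u @ zword n @ v) (u @ perm_word n \<sigma> @ v)"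
| refl: "Sn_eq n H u u"
| sym: "Sn_eq n H u v \<Longrightarrow> Sn_eq n H v u"
| trans: "Sn_eq n H u v \<Longrightarrow> Sn_eq n H v w \<Longrightarrow> Sn_eq n H u w"

definition FM :: "nat \<Rightarrow> nat list set" where
  "FM n = {w. set w \<subseteq> {1..n}}"

definition in_Sz :: "nat \<Rightarrow> (nat \<Rightarrow> nat) set \<Rightarrow> nat list \<Rightarrow> bool" where
  "in_Sz n H w \<longleftrightarrow> (\<exists>u \<in> FM n. Sn_eq n H w (u @ zword n))"

definition in_zS :: "nat \<Rightarrow> (nat \<Rightarrow> nat) set \<Rightarrow> nat list \<Rightarrow> bool" where
  "in_zS n H w \<longleftrightarrow> (\<exists>u \<in> FM n. Sn_eq n H w (zword n @ u))"

definition long_cycle :: "nat \<Rightarrow> nat \<Rightarrow> nat" where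
  "long_cycle n i = (if 1 \<le> i \<and> i < n then i + 1 else if i = n then 1 else i)"

definition stab :: "(nat \<Rightarrow> nat) set \<Rightarrow> nat \<Rightarrow> (nat \<Rightarrow> nat) set" where
  "stab H i = {\<sigma> \<in> H. \<sigma> i = i}"

definition setA :: "nat \<Rightarrow> (nat \<Rightarrow> nat) set \<Rightarrow> nat list set" where
  "setA n H = {[\<sigma> (n - 1), \<sigma> n] | \<sigma>. \<sigma> \<in> H}"

definition setA_tilde :: "(nat \<Rightarrow> nat) set \<Rightarrow> nat list set" where
  "setA_tilde H = {[\<sigma> 1, \<sigma> 2] | \<sigma>. \<sigma> \<in> H}"

end

theory Submission
  imports Defs
begin

text \<open>Read a word W over {1..n} through its orbit word, the sequence of H-orbits of the pairs of
  adjacent letters of W. Every factor x_\<sigma>(1) ... x_\<sigma>(n) with \<sigma> \<in> H spells the same pattern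
  P = O(1,2) ... O(n-1,n), and a defining relation changes the orbit word only at the two positions
  flanking such an occurrence of P. As H is abelian and does not contain the long cycle, P is not
  constant. The invariant is: the last two letters form a pair in A, and the orbit word does not
  end with an occurrence of P followed by a chain of blocks, each spelling a proper suffix of P whose
  length plus one is a period of P. Every word u z satisfies it, and a Fine-Wilf type argument on
  the periods of P shows that the defining relations preserve it; this proves (i). Part (ii) is
  part (i) for mirrored words, with letters i replaced by n + 1 - i and H conjugated accordingly.\<close>

text \<open>Euclid's algorithm on the two periods, as in the proof of the Fine-Wilf theorem.\<close>
lemma two_periods_endpoint:
  fixes w :: "nat \<Rightarrow> 'a"
  assumes "1 \<le> g" "1 \<le> k"
    and "\<forall>s<k. w s = w (s + g)"
    and "\<forall>s. 1 \<le> s \<longrightarrow> s < g \<longrightarrow> w s = w (s + k)"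
  shows "w 0 = w k"
  using assms
proof (induction "g + k" arbitrary: g k rule: less_induct)
  case less
  consider "k = g" | "k < g" | "g < k" by linarith
  then show ?case
  proof cases
    case 1
    then show ?thesis using less.prems(2,3) by auto
  next
    case 2
    have "\<forall>s<k. w s = w (s + (g - k))"
    proof (intro allI impI)
      fix s assume "s < k"
      have "w (s + (g - k)) = w (s + (g - k) + k)" using less.prems(4) 2 \<open>s < k\<close> by auto
      also have "\<dots> = w s" using less.prems(3) 2 \<open>s < k\<close> by simp
      finally show "w s = w (s + (g - k))" by simp
    qed
    moreover have "\<forall>s. 1 \<le> s \<longrightarrow> s < g - k \<longrightarrow> w s = w (s + k)" using less.prems(4) by auto
    ultimately show ?thesis using less.hyps[of "g - k" k] 2 less.prems(2) by simp
  next
    case 3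
    have "\<forall>s<k - g. w s = w (s + g)" using less.prems(3) by auto
    moreover have "\<forall>s. 1 \<le> s \<longrightarrow> s < g \<longrightarrow> w s = w (s + (k - g))"
    proof (intro allI impI)
      fix s assume "1 \<le> s" "s < g"
      have "w (s + (k - g)) = w (s + (k - g) + g)" using less.prems(3) \<open>s < g\<close> 3 by auto
      also have "\<dots> = w s" using less.prems(4) \<open>1 \<le> s\<close> \<open>s < g\<close> 3 by simp
      finally show "w s = w (s + (k - g))" by simp
    qed
    ultimately have "w 0 = w (k - g)" using less.hyps[of g "k - g"] 3 less.prems(1) by simp
    also have "\<dots> = w k" using less.prems(3)[rule_format, of "k - g"] 3 less.prems(1) by simp
    finally show ?thesis .
  qed
qed

definition is_period :: "(nat \<Rightarrow> 'a) \<Rightarrow> nat \<Rightarrow> nat \<Rightarrow> bool" where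
  "is_period d m e \<longleftrightarrow> 1 \<le> e \<and> e \<le> Suc m \<and> (\<forall>j. j + e < m \<longrightarrow> d j = d (j + e))"

text \<open>The word d has length m. In a suffix block from x to y the letters of \<delta> strictly between
  x and y spell the suffix of d of length y - x - 1; for y = x + Suc m they spell d itself.\<close>
definition suffix_block :: "(nat \<Rightarrow> 'a) \<Rightarrow> nat \<Rightarrow> (nat \<Rightarrow> 'a) \<Rightarrow> nat \<Rightarrow> nat \<Rightarrow> bool" where
  "suffix_block d m \<delta> x y \<longleftrightarrow>
     x < y \<and> is_period d m (y - x) \<and> (\<forall>p. x < p \<longrightarrow> p < y \<longrightarrow> \<delta> p = d (m - (y - p)))"

lemma is_period_difference:
  assumes g: "is_period d m g" and h: "is_period d m (g + k)" and "1 \<le> k"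
    and link: "\<forall>t. 1 \<le> t \<longrightarrow> t < g \<longrightarrow> d (m + t - (g + k)) = d (m + t - g)"
  shows "is_period d m k"
proof -
  have hm: "g + k \<le> Suc m" and "1 \<le> g" using g h unfolding is_period_def by auto
  have pg: "\<forall>j. j + g < m \<longrightarrow> d j = d (j + g)"
    and ph: "\<forall>j. j + (g + k) < m \<longrightarrow> d j = d (j + (g + k))"
    using g h unfolding is_period_def by blast+
  have "d j = d (j + k)" if jk: "j + k < m" for j
  proof -
    consider "j + (g + k) < m" | "j + (g + k) = m" | "m < j + (g + k)" by linarith
    then show ?thesis
    proof cases
      case 1
      have "d (j + k) = d (j + k + g)" using pg[rule_format, of "j + k"] 1 by (simp add: ac_simps)
      then show ?thesis using ph[rule_format, of j] 1 by (simp add: ac_simps)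
    next
      case 2
      \<comment> \<open>the word starting at j has periods g and k on overlapping ranges\<close>
      have "(\<lambda>s. d (j + s)) 0 = (\<lambda>s. d (j + s)) k"
      proof (rule two_periods_endpoint[of g k])
        show "\<forall>s<k. d (j + s) = d (j + (s + g))"
          using pg 2 by (auto simp: add.assoc[symmetric])
        show "\<forall>s. 1 \<le> s \<longrightarrow> s < g \<longrightarrow> d (j + s) = d (j + (s + k))"
        proof (intro allI impI)
          fix s assume "1 \<le> s" "s < g"
          moreover have "j + s = m + s - (g + k)" "j + (s + k) = m + s - g" using 2 by linarith+
          ultimately show "d (j + s) = d (j + (s + k))" using link by simp
        qed
      qed (use \<open>1 \<le> g\<close> \<open>1 \<le> k\<close> in auto)
      then show ?thesis by simp
    next
      case 3
      define t where "t = j + (g + k) - m"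
      have "1 \<le> t" "t < g" "j = m + t - (g + k)" "j + k = m + t - g"
        using 3 jk unfolding t_def by linarith+
      then show ?thesis using link by simp
    qed
  qed
  then show ?thesis unfolding is_period_def using hm \<open>1 \<le> k\<close> by simp
qed

lemma suffix_block_nested:
  assumes b1: "suffix_block d m \<delta> x y1" and b2: "suffix_block d m \<delta> x y2" and "y1 < y2"
  shows "suffix_block d m \<delta> y1 y2"
proof -
  have "x < y1" and g: "is_period d m (y1 - x)"
    and B1: "\<forall>p. x < p \<longrightarrow> p < y1 \<longrightarrow> \<delta> p = d (m - (y1 - p))"
    using b1 unfolding suffix_block_def by blast+
  have h: "is_period d m (y2 - x)"
    and B2: "\<forall>p. x < p \<longrightarrow> p < y2 \<longrightarrow> \<delta> p = d (m - (y2 - p))"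
    using b2 unfolding suffix_block_def by blast+
  have hm: "y2 - x \<le> Suc m" using h unfolding is_period_def by blast
  have "d (m + t - (y1 - x + (y2 - y1))) = d (m + t - (y1 - x))" if "1 \<le> t" "t < y1 - x" for t
  proof -
    have "m + t - (y1 - x + (y2 - y1)) = m - (y2 - (x + t))"
      and "m + t - (y1 - x) = m - (y1 - (x + t))"
      using that hm \<open>y1 < y2\<close> by linarith+
    then show ?thesis using B1 B2 that \<open>y1 < y2\<close> by auto
  qed
  then have "is_period d m (y2 - y1)"
    using is_period_difference[of d m "y1 - x" "y2 - y1"] g h \<open>x < y1\<close> \<open>y1 < y2\<close> by simp
  then show ?thesis unfolding suffix_block_def using B2 \<open>x < y1\<close> \<open>y1 < y2\<close> by auto
qed

lemma suffix_block_overlap: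
  assumes b: "suffix_block d m \<delta> x y" and occ: "suffix_block d m \<delta> a (a + Suc m)"
    and "x < a" "a < y"
  shows "suffix_block d m \<delta> y (a + Suc m)"
proof -
  have "y - x \<le> Suc m" and B: "\<forall>p. x < p \<longrightarrow> p < y \<longrightarrow> \<delta> p = d (m - (y - p))"
    using b unfolding suffix_block_def is_period_def by blast+
  have Bo: "\<forall>p. a < p \<longrightarrow> p < a + Suc m \<longrightarrow> \<delta> p = d (m - (a + Suc m - p))"
    using occ unfolding suffix_block_def by blast
  have "y < a + Suc m" using \<open>y - x \<le> Suc m\<close> \<open>x < a\<close> by linarith
  have "d j = d (j + (a + Suc m - y))" if j: "j + (a + Suc m - y) < m" for j
  proof -
    define p where "p = a + 1 + j"
    have "x < p" "p < y" "a < p" "p < a + Suc m"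
      using j \<open>x < a\<close> \<open>y < a + Suc m\<close> unfolding p_def by linarith+
    moreover have "m - (y - p) = j + (a + Suc m - y)" "m - (a + Suc m - p) = j"
      using j \<open>y - x \<le> Suc m\<close> \<open>x < a\<close> \<open>y < a + Suc m\<close> unfolding p_def by linarith+
    ultimately show ?thesis using B Bo by metis
  qed
  then have "is_period d m (a + Suc m - y)"
    unfolding is_period_def using \<open>y < a + Suc m\<close> \<open>a < y\<close> by auto
  then show ?thesis unfolding suffix_block_def using Bo \<open>y < a + Suc m\<close> \<open>a < y\<close> by auto
qed

inductive block_chain :: "(nat \<Rightarrow> 'a) \<Rightarrow> nat \<Rightarrow> (nat \<Rightarrow> 'a) \<Rightarrow> nat \<Rightarrow> nat \<Rightarrow> bool"
  for d m \<delta> where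
  block_chain_refl: "block_chain d m \<delta> x x"
| block_chain_step:
    "suffix_block d m \<delta> x z \<Longrightarrow> block_chain d m \<delta> z y \<Longrightarrow> block_chain d m \<delta> x y"

definition chained_occurrence :: "(nat \<Rightarrow> 'a) \<Rightarrow> nat \<Rightarrow> (nat \<Rightarrow> 'a) \<Rightarrow> nat \<Rightarrow> bool" where
  "chained_occurrence d m \<delta> N \<longleftrightarrow>
     (\<exists>a. suffix_block d m \<delta> a (a + Suc m) \<and> block_chain d m \<delta> (a + Suc m) N)"

lemma block_chain_le: "block_chain d m \<delta> x y \<Longrightarrow> x \<le> y"
  by (induction rule: block_chain.induct) (auto simp: suffix_block_def)

lemma suffix_block_cong:
  "suffix_block d m \<delta> x y \<Longrightarrow> (\<forall>p. x < p \<longrightarrow> p < y \<longrightarrow> \<delta>' p = \<delta> p)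
    \<Longrightarrow> suffix_block d m \<delta>' x y"
  unfolding suffix_block_def by auto

lemma block_chain_cong:
  "block_chain d m \<delta> x y \<Longrightarrow> (\<forall>p. x < p \<longrightarrow> \<delta>' p = \<delta> p) \<Longrightarrow> block_chain d m \<delta>' x y"
proof (induction rule: block_chain.induct)
  case (block_chain_refl x)
  show ?case by (rule block_chain.block_chain_refl)
next
  case (block_chain_step x z y)
  have "x < z" using block_chain_step.hyps(1) unfolding suffix_block_def by simp
  then have "block_chain d m \<delta>' z y" using block_chain_step.IH block_chain_step.prems by simp
  moreover have "suffix_block d m \<delta>' x z"
    using suffix_block_cong[OF block_chain_step.hyps(1)] block_chain_step.prems by simp
  ultimately show ?case by (blast intro: block_chain.block_chain_step)
qed

lemma length_ge_2_if_not_is_period_one: "\<not> is_period d m 1 \<Longrightarrow> 2 \<le> m"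
  unfolding is_period_def by auto

lemma suffix_block_gap: "\<not> is_period d m 1 \<Longrightarrow> suffix_block d m \<delta> x y \<Longrightarrow> x + 2 \<le> y"
  unfolding suffix_block_def by (cases "y - x = 1") auto

text \<open>Chains from a common start are merged block by block using suffix_block_nested; blocks
  have length at least 2 because d is not constant.\<close>
lemma block_chain_prefix:
  assumes "\<not> is_period d m 1"
  shows "block_chain d m \<delta> x y \<Longrightarrow> block_chain d m \<delta> x z \<Longrightarrow> y \<le> Suc z
    \<Longrightarrow> y \<le> z \<and> block_chain d m \<delta> y z"
proof (induction "(y - x) + (z - x)" arbitrary: x y z rule: less_induct)
  case less
  from less.prems(1) show ?case
  proof cases
    case block_chain_refl
    then show ?thesis using less.prems(2) block_chain_le by blast
  next
    case (block_chain_step x1)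
    note bx1 = this(1) and cx1 = this(2)
    have x1: "x + 2 \<le> x1" "x1 \<le> y"
      using suffix_block_gap[OF assms bx1] block_chain_le[OF cx1] by simp_all
    from less.prems(2) show ?thesis
    proof cases
      case block_chain_refl
      then show ?thesis using x1 less.prems(3) by linarith
    next
      case (block_chain_step z1)
      note bz1 = this(1) and cz1 = this(2)
      have z1: "x + 2 \<le> z1" "z1 \<le> z"
        using suffix_block_gap[OF assms bz1] block_chain_le[OF cz1] by simp_all
      consider "x1 = z1" | "x1 < z1" | "z1 < x1" by linarith
      then show ?thesis
      proof cases
        case 1
        have "(y - x1) + (z - x1) < (y - x) + (z - x)" using x1 z1 by linarith
        then show ?thesis using less.hyps[where x = x1 and y = y and z = z] cx1 cz1 less.prems(3) 1 by blast
      next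
        case 2
        then have "block_chain d m \<delta> x1 z"
          using suffix_block_nested[OF bx1 bz1] cz1 block_chain.block_chain_step by blast
        moreover have "(y - x1) + (z - x1) < (y - x) + (z - x)" using x1 z1 2 by linarith
        ultimately show ?thesis
          using less.hyps[where x = x1 and y = y and z = z] cx1 less.prems(3) by blast
      next
        case 3
        then have "block_chain d m \<delta> z1 y"
          using suffix_block_nested[OF bz1 bx1] cx1 block_chain.block_chain_step by blast
        moreover have "(y - z1) + (z - z1) < (y - x) + (z - x)" using x1 z1 3 by linarith
        ultimately show ?thesis
          using less.hyps[where x = z1 and y = y and z = z] cz1 less.prems(3) by blast
      qed
    qed
  qed
qed

lemma block_chain_through_occurrence:
  assumes "\<not> is_period d m 1"
  shows "block_chain d m \<delta> x y \<Longrightarrow> suffix_block d m \<delta> a (a + Suc m) \<Longrightarrow> x \<le> a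
    \<Longrightarrow> a + Suc m \<le> Suc y \<Longrightarrow> a + Suc m \<le> y \<and> block_chain d m \<delta> (a + Suc m) y"
proof (induction rule: block_chain.induct)
  case (block_chain_refl x)
  then show ?case using length_ge_2_if_not_is_period_one[OF assms] by linarith
next
  case (block_chain_step x x1 y)
  show ?case
  proof (cases "x1 \<le> a")
    case True
    then show ?thesis using block_chain_step by blast
  next
    case False
    have "block_chain d m \<delta> x (a + Suc m)"
    proof (cases "x = a")
      case True
      then show ?thesis
        using block_chain_step.prems(1) block_chain.block_chain_step block_chain.block_chain_refl by metis
    next
      case False
      then have "suffix_block d m \<delta> x1 (a + Suc m)"
        using suffix_block_overlap[OF block_chain_step.hyps(1) block_chain_step.prems(1)]
          block_chain_step.prems(2) \<open>\<not> x1 \<le> a\<close> by simp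
      then show ?thesis
        using block_chain_step.hyps(1) block_chain.block_chain_step block_chain.block_chain_refl by metis
    qed
    moreover have "block_chain d m \<delta> x y"
      using block_chain_step.hyps block_chain.block_chain_step by metis
    ultimately show ?thesis using block_chain_prefix[OF assms] block_chain_step.prems(3) by blast
  qed
qed

lemma no_chained_occurrence_before_end:
  assumes "\<not> is_period d m 1" and "suffix_block d m \<delta> a (a + Suc m)"
  shows "\<not> chained_occurrence d m \<delta> (a + m)"
proof
  assume "chained_occurrence d m \<delta> (a + m)"
  then obtain b
    where b: "suffix_block d m \<delta> b (b + Suc m)" "block_chain d m \<delta> (b + Suc m) (a + m)"
    unfolding chained_occurrence_def by blast
  then have "block_chain d m \<delta> b (a + m)" by (rule block_chain.block_chain_step)
  moreover have "b \<le> a" using block_chain_le[OF b(2)] by simp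
  ultimately show False using block_chain_through_occurrence[OF assms(1)] assms(2) by fastforce
qed

text \<open>This models a defining relation acting on the orbit word: an occurrence of d is rewritten,
  which changes \<delta> only at the two positions flanking it.\<close>
lemma chained_occurrence_replace:
  assumes nc: "\<not> is_period d m 1"
    and occ: "suffix_block d m \<delta> a (a + Suc m)"
    and same: "\<forall>p. p \<noteq> a \<longrightarrow> p \<noteq> a + Suc m \<longrightarrow> \<delta>' p = \<delta> p"
    and "a + Suc m \<le> Suc N"
    and "chained_occurrence d m \<delta>' N"
  shows "chained_occurrence d m \<delta> N"
proof -
  obtain x where bx: "suffix_block d m \<delta>' x (x + Suc m)"
    and cx: "block_chain d m \<delta>' (x + Suc m) N"
    using assms(5) unfolding chained_occurrence_def by blast
  have occ': "suffix_block d m \<delta>' a (a + Suc m)" using suffix_block_cong[OF occ] same by simp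
  have through: "block_chain d m \<delta>' (a + Suc m) N" if "x < a + Suc m"
  proof (cases "x \<le> a")
    case True
    have "block_chain d m \<delta>' x N" using bx cx by (rule block_chain.block_chain_step)
    then show ?thesis using block_chain_through_occurrence[OF nc _ occ' True] assms(4) by blast
  next
    case False
    then have "suffix_block d m \<delta>' (a + Suc m) (x + Suc m)"
      using suffix_block_overlap[OF occ' bx] that by simp
    then show ?thesis using cx by (rule block_chain.block_chain_step)
  qed
  show ?thesis
  proof (cases "x < a + Suc m")
    case True
    have "\<forall>p. a + Suc m < p \<longrightarrow> \<delta> p = \<delta>' p" using same by simp
    then have "block_chain d m \<delta> (a + Suc m) N"
      using block_chain_cong[OF through[OF True]] by blast
    then show ?thesis unfolding chained_occurrence_def using occ by blast
  next
    case False
    then have "suffix_block d m \<delta> x (x + Suc m)" "block_chain d m \<delta> (x + Suc m) N"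
      using suffix_block_cong[OF bx] block_chain_cong[OF cx] same by auto
    then show ?thesis unfolding chained_occurrence_def by blast
  qed
qed

definition abelian_perm_group :: "nat \<Rightarrow> (nat \<Rightarrow> nat) set \<Rightarrow> bool" where
  "abelian_perm_group n H \<longleftrightarrow> (\<forall>\<sigma>\<in>H. \<sigma> permutes {1..n}) \<and> id \<in> H
     \<and> (\<forall>\<sigma>\<in>H. \<forall>\<tau>\<in>H. \<sigma> \<circ> \<tau> \<in> H) \<and> (\<forall>\<sigma>\<in>H. \<exists>\<sigma>'\<in>H. \<sigma>' \<circ> \<sigma> = id)
     \<and> (\<forall>\<sigma>\<in>H. \<forall>\<tau>\<in>H. \<sigma> \<circ> \<tau> = \<tau> \<circ> \<sigma>)"

lemma abelian_perm_groupI: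
  assumes "subgroup H (sym_group n)" and "\<forall>\<sigma>\<in>H. \<forall>\<tau>\<in>H. \<sigma> \<circ> \<tau> = \<tau> \<circ> \<sigma>"
  shows "abelian_perm_group n H"
proof -
  interpret G: group "sym_group n" by (rule sym_group_is_group)
  have inv: "\<exists>\<sigma>'\<in>H. \<sigma>' \<circ> \<sigma> = id" if "\<sigma> \<in> H" for \<sigma>
  proof -
    have "\<sigma> \<in> carrier (sym_group n)" using that subgroup.subset[OF assms(1)] by blast
    then have "inv\<^bsub>sym_group n\<^esub> \<sigma> \<otimes>\<^bsub>sym_group n\<^esub> \<sigma> = \<one>\<^bsub>sym_group n\<^esub>" by (rule G.l_inv)
    then show ?thesis
      using subgroup.m_inv_closed[OF assms(1) that] sym_group_mult sym_group_one by metis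
  qed
  have "\<forall>\<sigma>\<in>H. \<sigma> permutes {1..n}"
    using subgroup.subset[OF assms(1)] by (auto simp: sym_group_carrier)
  moreover have "id \<in> H" using subgroup.one_closed[OF assms(1)] by (simp add: sym_group_one)
  moreover have "\<forall>\<sigma>\<in>H. \<forall>\<tau>\<in>H. \<sigma> \<circ> \<tau> \<in> H"
    using subgroup.m_closed[OF assms(1)] by (simp add: sym_group_mult)
  ultimately show ?thesis unfolding abelian_perm_group_def using inv assms(2) by blast
qed

definition pair_orbit :: "(nat \<Rightarrow> nat) set \<Rightarrow> nat \<Rightarrow> nat \<Rightarrow> (nat \<times> nat) set" where
  "pair_orbit H a b = {(\<tau> a, \<tau> b) | \<tau>. \<tau> \<in> H}"

lemma pair_orbit_apply:
  assumes "abelian_perm_group n H" and "\<sigma> \<in> H"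
  shows "pair_orbit H (\<sigma> a) (\<sigma> b) = pair_orbit H a b"
proof
  show "pair_orbit H (\<sigma> a) (\<sigma> b) \<subseteq> pair_orbit H a b"
  proof
    fix x assume "x \<in> pair_orbit H (\<sigma> a) (\<sigma> b)"
    then obtain \<tau> where "\<tau> \<in> H" "x = ((\<tau> \<circ> \<sigma>) a, (\<tau> \<circ> \<sigma>) b)"
      unfolding pair_orbit_def by auto
    moreover have "\<tau> \<circ> \<sigma> \<in> H"
      using assms \<open>\<tau> \<in> H\<close> unfolding abelian_perm_group_def by blast
    ultimately show "x \<in> pair_orbit H a b" unfolding pair_orbit_def by blast
  qed
next
  show "pair_orbit H a b \<subseteq> pair_orbit H (\<sigma> a) (\<sigma> b)"
  proof
    fix x assume "x \<in> pair_orbit H a b"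
    then obtain \<tau> where "\<tau> \<in> H" "x = (\<tau> a, \<tau> b)" unfolding pair_orbit_def by auto
    obtain \<sigma>' where "\<sigma>' \<in> H" "\<sigma>' \<circ> \<sigma> = id"
      using assms unfolding abelian_perm_group_def by blast
    then have "x = ((\<tau> \<circ> \<sigma>') (\<sigma> a), (\<tau> \<circ> \<sigma>') (\<sigma> b))"
      using \<open>x = (\<tau> a, \<tau> b)\<close> by (simp add: pointfree_idE)
    moreover have "\<tau> \<circ> \<sigma>' \<in> H"
      using assms \<open>\<tau> \<in> H\<close> \<open>\<sigma>' \<in> H\<close> unfolding abelian_perm_group_def by blast
    ultimately show "x \<in> pair_orbit H (\<sigma> a) (\<sigma> b)" unfolding pair_orbit_def by blast
  qed
qed

text \<open>Position p of the orbit word of W records the H-orbit of the letters at positions p - 1 and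
  p of W (counting from 0); a factor perm_word n \<sigma> of W therefore contributes orbit_pattern H,
  a word of length n - 1, to the orbit word.\<close>
definition orbit_word :: "(nat \<Rightarrow> nat) set \<Rightarrow> nat list \<Rightarrow> nat \<Rightarrow> (nat \<times> nat) set option" where
  "orbit_word H W p =
     (if 1 \<le> p \<and> p < length W then Some (pair_orbit H (W ! (p - 1)) (W ! p)) else None)"

definition orbit_pattern :: "(nat \<Rightarrow> nat) set \<Rightarrow> nat \<Rightarrow> (nat \<times> nat) set option" where
  "orbit_pattern H j = Some (pair_orbit H (j + 1) (j + 2))"

lemma length_perm_word [simp]: "length (perm_word n \<sigma>) = n"
  unfolding perm_word_def by simp

lemma nth_window:
  assumes "length u \<le> q" "q < length u + n"
  shows "(u @ perm_word n \<sigma> @ v) ! q = \<sigma> (Suc (q - length u))"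
proof -
  have "q - length u < n" using assms by linarith
  then have "(u @ perm_word n \<sigma> @ v) ! q = perm_word n \<sigma> ! (q - length u)"
    using assms(1) by (simp add: nth_append)
  also have "\<dots> = \<sigma> (Suc (q - length u))"
    using \<open>q - length u < n\<close> unfolding perm_word_def by (simp del: upt_Suc)
  finally show ?thesis .
qed

lemma orbit_word_window:
  assumes "abelian_perm_group n H" "\<sigma> \<in> H" and "length u < p" "p < length u + n"
  shows "orbit_word H (u @ perm_word n \<sigma> @ v) p
           = Some (pair_orbit H (p - length u) (Suc (p - length u)))"
proof -
  have "(u @ perm_word n \<sigma> @ v) ! (p - 1) = \<sigma> (p - length u)"
    using nth_window[of u "p - 1" n] assms(3,4) by (simp add: Suc_diff_Suc)
  moreover have "(u @ perm_word n \<sigma> @ v) ! p = \<sigma> (Suc (p - length u))"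
    using nth_window assms(3,4) by simp
  ultimately show ?thesis
    using assms(3,4) pair_orbit_apply[OF assms(1,2)] unfolding orbit_word_def
    by (simp add: perm_word_def)
qed

lemma window_occurrence:
  assumes "abelian_perm_group n H" "\<sigma> \<in> H" and "1 \<le> n"
  shows "suffix_block (orbit_pattern H) (n - 1) (orbit_word H (u @ perm_word n \<sigma> @ v))
           (length u) (length u + Suc (n - 1))"
  unfolding suffix_block_def is_period_def
proof (intro conjI allI impI)
  fix p assume p: "length u < p" "p < length u + Suc (n - 1)"
  have "n - 1 - (length u + Suc (n - 1) - p) + 1 = p - length u" using p by linarith
  then show "orbit_word H (u @ perm_word n \<sigma> @ v) p
      = orbit_pattern H (n - 1 - (length u + Suc (n - 1) - p))"
    using orbit_word_window[OF assms(1,2)] p assms(3) unfolding orbit_pattern_def by simp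
qed (use assms(3) in auto)

lemma orbit_word_replace_window:
  assumes "abelian_perm_group n H" "\<sigma> \<in> H" "\<tau> \<in> H"
    and "p \<noteq> length u" "p \<noteq> length u + n"
  shows "orbit_word H (u @ perm_word n \<tau> @ v) p = orbit_word H (u @ perm_word n \<sigma> @ v) p"
proof -
  consider "p < length u" | "length u < p" "p < length u + n" | "length u + n < p"
    using assms(4,5) by linarith
  then show ?thesis
  proof cases
    case 1
    then show ?thesis unfolding orbit_word_def by (auto simp: nth_append)
  next
    case 2
    then show ?thesis using orbit_word_window[OF assms(1)] assms(2,3) by simp
  next
    case 3
    have "(u @ perm_word n \<rho> @ v) ! q = v ! (q - length u - n)" if "length u + n \<le> q" for \<rho> q
    proof -
      have "\<not> q < length u" "\<not> q - length u < n" using that by linarith+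
      then show ?thesis by (simp add: nth_append)
    qed
    then show ?thesis using 3 unfolding orbit_word_def by simp
  qed
qed

lemma long_cycle_eqI:
  assumes "c permutes {1..n}" and "1 \<le> n" and "\<forall>i. 1 \<le> i \<longrightarrow> i < n \<longrightarrow> c i = Suc i"
  shows "c = long_cycle n"
proof -
  have cn: "c n \<in> {1..n}" using permutes_in_image[OF assms(1)] assms(2) by auto
  have "c n = 1"
  proof (rule ccontr)
    assume "c n \<noteq> 1"
    then have "c (c n - 1) = c n" using assms(3) cn by auto
    then have "c n - 1 = n" using permutes_inj[OF assms(1)] by (meson injD)
    then show False using cn by auto
  qed
  show ?thesis
  proof
    fix i
    show "c i = long_cycle n i"
      using assms(3) \<open>c n = 1\<close> permutes_not_in[OF assms(1), of i] unfolding long_cycle_def by auto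
  qed
qed

text \<open>This is where commutativity of H and the absence of the long cycle are used: if all adjacent
  pairs (i, i + 1) formed one orbit, the element mapping (1, 2) to (2, 3) would commute with the
  elements mapping (1, 2) to (i, i + 1), and hence be the long cycle.\<close>
lemma orbit_pattern_not_periodic:
  assumes H: "abelian_perm_group n H" and "long_cycle n \<notin> H" and "3 \<le> n"
  shows "\<not> is_period (orbit_pattern H) (n - 1) 1"
proof
  assume "is_period (orbit_pattern H) (n - 1) 1"
  then have shift:
    "pair_orbit H (Suc j) (Suc (Suc j)) = pair_orbit H (Suc (Suc j)) (Suc (Suc (Suc j)))"
    if "j + 1 < n - 1" for j
    using that unfolding is_period_def orbit_pattern_def by simp
  have const: "pair_orbit H i (Suc i) = pair_orbit H 1 2" if "1 \<le> i" "i < n" for i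
    using that
  proof (induction i)
    case (Suc i)
    then show ?case using shift[of "i - 1"] by (cases "i = 0") (auto simp: numeral_2_eq_2)
  qed simp
  have "id \<in> H" using H unfolding abelian_perm_group_def by blast
  then have moves: "\<exists>\<tau>\<in>H. \<tau> 1 = i \<and> \<tau> 2 = Suc i" if "1 \<le> i" "i < n" for i
  proof -
    have "(i, Suc i) \<in> pair_orbit H i (Suc i)"
      unfolding pair_orbit_def using \<open>id \<in> H\<close> by (auto intro!: exI[of _ id])
    then show ?thesis using const[OF that] unfolding pair_orbit_def by auto
  qed
  obtain c where c: "c \<in> H" "c 1 = 2" "c 2 = 3" using moves[of 2] \<open>3 \<le> n\<close> by auto
  have "c i = Suc i" if i: "1 \<le> i" "i < n" for i
  proof -
    obtain \<tau> where "\<tau> \<in> H" "\<tau> 1 = i" "\<tau> 2 = Suc i" using moves[OF i] by blast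
    moreover have "c (\<tau> 1) = \<tau> (c 1)"
      using H c(1) \<open>\<tau> \<in> H\<close> unfolding abelian_perm_group_def by (metis comp_apply)
    ultimately show ?thesis using c by simp
  qed
  moreover have "c permutes {1..n}" using H c(1) unfolding abelian_perm_group_def by blast
  ultimately have "c = long_cycle n" using long_cycle_eqI \<open>3 \<le> n\<close> by simp
  then show False using \<open>long_cycle n \<notin> H\<close> c(1) by simp
qed

lemma zword_eq_perm_word_id: "zword n = perm_word n id"
  unfolding zword_def perm_word_def by simp

lemma last_pair_window:
  assumes "2 \<le> n"
  shows "drop (length (x @ perm_word n \<sigma>) - 2) (x @ perm_word n \<sigma>) = [\<sigma> (n - 1), \<sigma> n]"
proof -
  obtain k where "n = Suc (Suc k)" using assms by (metis add_2_eq_Suc le_Suc_ex)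
  then show ?thesis unfolding perm_word_def by simp
qed

definition tail_invariant :: "nat \<Rightarrow> (nat \<Rightarrow> nat) set \<Rightarrow> nat list \<Rightarrow> bool" where
  "tail_invariant n H W \<longleftrightarrow>
     \<not> chained_occurrence (orbit_pattern H) (n - 1) (orbit_word H W) (length W - 1)
     \<and> drop (length W - 2) W \<in> setA n H"

lemma tail_invariant_zword:
  assumes "abelian_perm_group n H" "long_cycle n \<notin> H" "3 \<le> n"
  shows "tail_invariant n H (u @ zword n)"
proof -
  have "id \<in> H" using assms(1) unfolding abelian_perm_group_def by blast
  have "suffix_block (orbit_pattern H) (n - 1) (orbit_word H (u @ zword n))
          (length u) (length u + Suc (n - 1))"
    using window_occurrence[OF assms(1) \<open>id \<in> H\<close>, of u "[]"] assms(3)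
    by (simp add: zword_eq_perm_word_id)
  then have "\<not> chained_occurrence (orbit_pattern H) (n - 1) (orbit_word H (u @ zword n))
               (length u + (n - 1))"
    by (rule no_chained_occurrence_before_end[OF orbit_pattern_not_periodic[OF assms]])
  moreover have "drop (length (u @ zword n) - 2) (u @ zword n) \<in> setA n H"
    using last_pair_window[of n u id] assms(3) \<open>id \<in> H\<close> unfolding setA_def zword_eq_perm_word_id
    by (auto intro!: exI[of _ id])
  ultimately show ?thesis
    unfolding tail_invariant_def using assms(3) by (simp add: zword_eq_perm_word_id)
qed

lemma tail_invariant_replace_window:
  assumes H: "abelian_perm_group n H" and "long_cycle n \<notin> H" "3 \<le> n"
    and "\<sigma> \<in> H" "\<tau> \<in> H"
    and inv: "tail_invariant n H (x @ perm_word n \<sigma> @ y)"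
  shows "tail_invariant n H (x @ perm_word n \<tau> @ y)"
proof -
  define W where "W = x @ perm_word n \<sigma> @ y"
  define W' where "W' = x @ perm_word n \<tau> @ y"
  let ?chained =
    "\<lambda>V. chained_occurrence (orbit_pattern H) (n - 1) (orbit_word H V) (length W - 1)"
  have len: "length W' = length W" "length W = length x + n + length y"
    unfolding W_def W'_def by simp_all
  have occ: "suffix_block (orbit_pattern H) (n - 1) (orbit_word H W)
               (length x) (length x + Suc (n - 1))"
    unfolding W_def using window_occurrence[OF H \<open>\<sigma> \<in> H\<close>] assms(3) by simp
  have "\<not> ?chained W" using inv unfolding tail_invariant_def W_def by simp
  moreover have "?chained W' \<Longrightarrow> ?chained W"
  proof (rule chained_occurrence_replace[OF orbit_pattern_not_periodic[OF H assms(2,3)] occ])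
    show "\<forall>p. p \<noteq> length x \<longrightarrow> p \<noteq> length x + Suc (n - 1)
            \<longrightarrow> orbit_word H W' p = orbit_word H W p"
      unfolding W_def W'_def using orbit_word_replace_window[OF H \<open>\<sigma> \<in> H\<close> \<open>\<tau> \<in> H\<close>] assms(3)
      by simp
  qed (use len assms(3) in auto)
  ultimately have "\<not> ?chained W'" by blast
  moreover have "drop (length W' - 2) W' \<in> setA n H"
  proof (cases "length y")
    case 0
    then show ?thesis
      unfolding W'_def setA_def using last_pair_window[of n x \<tau>] assms(3,5) by auto
  next
    case (Suc k)
    \<comment> \<open>a window followed by a single letter would end a chained occurrence\<close>
    have "k \<noteq> 0"
    proof
      assume "k = 0"
      then have "length W - 1 = length x + Suc (n - 1)" using len Suc assms(3) by simp
      then have "?chained W"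
        using occ block_chain.block_chain_refl unfolding chained_occurrence_def by metis
      then show False using \<open>\<not> ?chained W\<close> by blast
    qed
    then have "drop (length W' - 2) W' = drop (length W - 2) W"
      unfolding W_def W'_def using Suc by simp
    then show ?thesis using inv unfolding tail_invariant_def W_def by simp
  qed
  ultimately show ?thesis unfolding tail_invariant_def W'_def len(1)[unfolded W'_def] by simp
qed

lemma tail_invariant_Sn_eq:
  assumes "abelian_perm_group n H" "long_cycle n \<notin> H" "3 \<le> n"
  shows "Sn_eq n H u v \<Longrightarrow> tail_invariant n H u \<longleftrightarrow> tail_invariant n H v"
proof (induction rule: Sn_eq.induct)
  case (rel \<sigma> u v)
  have "id \<in> H" using assms(1) unfolding abelian_perm_group_def by blast
  then show ?case
    using tail_invariant_replace_window[OF assms] rel unfolding zword_eq_perm_word_id by blast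
qed auto

lemma perm_of_two_cases:
  assumes "\<sigma> permutes {1..2}"
  shows "\<sigma> = id \<or> \<sigma> = long_cycle 2"
proof -
  have "\<sigma> 1 \<in> {1..2}" "\<sigma> 2 \<in> {1..2}" using permutes_in_image[OF assms] by auto
  moreover have "\<sigma> 1 \<noteq> \<sigma> 2"
  proof
    assume "\<sigma> 1 = \<sigma> 2"
    with permutes_inj[OF assms] have "(1::nat) = 2" by (rule injD)
    then show False by simp
  qed
  ultimately have "\<sigma> 1 = 1 \<and> \<sigma> 2 = 2 \<or> \<sigma> 1 = 2 \<and> \<sigma> 2 = 1" by auto
  moreover have other: "x = 1 \<or> x = 2 \<or> \<sigma> x = x" for x
    using permutes_not_in[OF assms, of x] by (cases "x \<in> {1..2}") auto
  ultimately show ?thesis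
  proof (elim disjE)
    assume "\<sigma> 1 = 1 \<and> \<sigma> 2 = 2"
    then have "\<sigma> x = id x" for x using other[of x] by auto
    then show ?thesis by blast
  next
    assume "\<sigma> 1 = 2 \<and> \<sigma> 2 = 1"
    then have "\<sigma> x = long_cycle 2 x" for x
      using other[of x] by (cases "x = 1") (auto simp: long_cycle_def)
    then show ?thesis by blast
  qed
qed

lemma Sn_eq_trivial_group:
  assumes "\<forall>\<sigma>\<in>H. \<sigma> = id"
  shows "Sn_eq n H u v \<Longrightarrow> u = v"
  by (induction rule: Sn_eq.induct) (use assms in \<open>auto simp: zword_eq_perm_word_id\<close>)

lemma last_pair_mem_setA:
  assumes H: "abelian_perm_group n H" and "long_cycle n \<notin> H" "2 \<le> n"
    and eq: "Sn_eq n H (w @ [i, j]) (u @ zword n)"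
  shows "[i, j] \<in> setA n H"
proof (cases "n = 2")
  case True
  have "id \<in> H" using H unfolding abelian_perm_group_def by blast
  have "\<forall>\<sigma>\<in>H. \<sigma> = id"
    using H perm_of_two_cases \<open>long_cycle n \<notin> H\<close> True unfolding abelian_perm_group_def by blast
  then have "w @ [i, j] = u @ [1, 2]"
    using Sn_eq_trivial_group eq True by (simp add: zword_def numeral_2_eq_2)
  then show ?thesis
    unfolding setA_def using True \<open>id \<in> H\<close> by (auto intro!: exI[of _ id])
next
  case False
  then have "tail_invariant n H (w @ [i, j])"
    using tail_invariant_Sn_eq[OF H \<open>long_cycle n \<notin> H\<close> _ eq]
      tail_invariant_zword[OF H \<open>long_cycle n \<notin> H\<close>] \<open>2 \<le> n\<close> by simp
  then show ?thesis unfolding tail_invariant_def by simp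
qed

definition mirror :: "nat \<Rightarrow> nat \<Rightarrow> nat" where
  "mirror n i = (if 1 \<le> i \<and> i \<le> n then Suc n - i else i)"

lemma mirror_mirror [simp]: "mirror n (mirror n i) = i"
  unfolding mirror_def by auto

lemma mirror_comp_mirror [simp]: "mirror n \<circ> mirror n = id"
  by (rule ext) simp

lemma mirror_permutes: "mirror n permutes {1..n}"
  unfolding permutes_def
proof (intro conjI allI impI)
  fix x assume "x \<notin> {1..n}"
  then show "mirror n x = x" unfolding mirror_def by auto
next
  fix y show "\<exists>!x. mirror n x = y" by (metis mirror_mirror)
qed

definition mirror_conj :: "nat \<Rightarrow> (nat \<Rightarrow> nat) set \<Rightarrow> (nat \<Rightarrow> nat) set" where
  "mirror_conj n H = (\<lambda>\<sigma>. mirror n \<circ> \<sigma> \<circ> mirror n) ` H"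

lemma mirror_conj_comp:
  "(mirror n \<circ> \<sigma> \<circ> mirror n) \<circ> (mirror n \<circ> \<tau> \<circ> mirror n)
     = mirror n \<circ> (\<sigma> \<circ> \<tau>) \<circ> mirror n"
  by (rule ext) simp

lemma abelian_perm_group_mirror_conj:
  assumes "abelian_perm_group n H"
  shows "abelian_perm_group n (mirror_conj n H)"
proof -
  let ?c = "\<lambda>\<sigma>. mirror n \<circ> \<sigma> \<circ> mirror n"
  have "\<forall>\<sigma>\<in>H. \<sigma> permutes {1..n}" and "id \<in> H"
    and closed: "\<forall>\<sigma>\<in>H. \<forall>\<tau>\<in>H. \<sigma> \<circ> \<tau> \<in> H"
    and inv: "\<forall>\<sigma>\<in>H. \<exists>\<sigma>'\<in>H. \<sigma>' \<circ> \<sigma> = id"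
    and comm: "\<forall>\<sigma>\<in>H. \<forall>\<tau>\<in>H. \<sigma> \<circ> \<tau> = \<tau> \<circ> \<sigma>"
    using assms unfolding abelian_perm_group_def by blast+
  have "\<forall>\<sigma>\<in>H. ?c \<sigma> permutes {1..n}"
    using \<open>\<forall>\<sigma>\<in>H. \<sigma> permutes {1..n}\<close> mirror_permutes permutes_compose by blast
  moreover have "id \<in> ?c ` H" using \<open>id \<in> H\<close> image_eqI[of id ?c id] by simp
  moreover have "\<forall>\<sigma>\<in>H. \<forall>\<tau>\<in>H. ?c \<sigma> \<circ> ?c \<tau> \<in> ?c ` H"
    using closed by (simp add: mirror_conj_comp)
  moreover have "\<forall>\<sigma>\<in>H. \<exists>\<sigma>'\<in>?c ` H. \<sigma>' \<circ> ?c \<sigma> = id"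
    using inv by (metis (no_types, lifting) image_eqI mirror_conj_comp mirror_comp_mirror comp_id)
  moreover have "\<forall>\<sigma>\<in>H. \<forall>\<tau>\<in>H. ?c \<sigma> \<circ> ?c \<tau> = ?c \<tau> \<circ> ?c \<sigma>"
    using comm by (simp add: mirror_conj_comp)
  ultimately show ?thesis unfolding abelian_perm_group_def mirror_conj_def by blast
qed

lemma long_cycle_mirror_inverse:
  "1 \<le> n \<Longrightarrow> (mirror n \<circ> long_cycle n \<circ> mirror n) \<circ> long_cycle n = id"
  by (rule ext) (auto simp: mirror_def long_cycle_def)

lemma long_cycle_notin_mirror_conj:
  assumes "abelian_perm_group n H" "long_cycle n \<notin> H" "1 \<le> n"
  shows "long_cycle n \<notin> mirror_conj n H"
proof
  assume "long_cycle n \<in> mirror_conj n H"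
  then obtain \<sigma> where "\<sigma> \<in> H" "long_cycle n = mirror n \<circ> \<sigma> \<circ> mirror n"
    unfolding mirror_conj_def by blast
  then have \<sigma>: "\<sigma> = mirror n \<circ> long_cycle n \<circ> mirror n" by (simp add: fun_eq_iff)
  obtain \<sigma>' where "\<sigma>' \<in> H" "\<sigma>' \<circ> \<sigma> = id"
    using assms(1) \<open>\<sigma> \<in> H\<close> unfolding abelian_perm_group_def by blast
  \<comment> \<open>the inverse of \<sigma> in H is the long cycle itself\<close>
  have "\<sigma>' = \<sigma>' \<circ> (\<sigma> \<circ> long_cycle n)"
    using long_cycle_mirror_inverse[OF assms(3)] \<sigma> by simp
  also have "\<dots> = long_cycle n" using \<open>\<sigma>' \<circ> \<sigma> = id\<close> by (simp add: o_assoc)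
  finally show False using \<open>\<sigma>' \<in> H\<close> assms(2) by simp
qed

lemma map_mirror_rev_perm_word:
  "map (mirror n) (rev (perm_word n \<sigma>)) = perm_word n (mirror n \<circ> \<sigma> \<circ> mirror n)"
proof (rule nth_equalityI)
  fix i assume "i < length (map (mirror n) (rev (perm_word n \<sigma>)))"
  then have "i < n" by simp
  then have "map (mirror n) (rev (perm_word n \<sigma>)) ! i = mirror n (\<sigma> (n - i))"
    by (simp add: rev_nth perm_word_def Suc_diff_Suc del: upt_Suc)
  also have "\<dots> = perm_word n (mirror n \<circ> \<sigma> \<circ> mirror n) ! i"
    using \<open>i < n\<close> by (simp add: perm_word_def mirror_def del: upt_Suc)
  finally show "map (mirror n) (rev (perm_word n \<sigma>)) ! i
      = perm_word n (mirror n \<circ> \<sigma> \<circ> mirror n) ! i" .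
qed simp

lemma map_mirror_rev_zword: "map (mirror n) (rev (zword n)) = zword n"
  using map_mirror_rev_perm_word[of n id] by (simp add: zword_eq_perm_word_id)

lemma Sn_eq_mirror:
  "Sn_eq n H u v
    \<Longrightarrow> Sn_eq n (mirror_conj n H) (map (mirror n) (rev u)) (map (mirror n) (rev v))"
proof (induction rule: Sn_eq.induct)
  case (rel \<sigma> u v)
  then have "mirror n \<circ> \<sigma> \<circ> mirror n \<in> mirror_conj n H" unfolding mirror_conj_def by blast
  then show ?case
    using Sn_eq.rel[where H = "mirror_conj n H"
        and u = "map (mirror n) (rev v)" and v = "map (mirror n) (rev u)"]
    by (simp add: map_mirror_rev_perm_word map_mirror_rev_zword)
qed (auto intro: Sn_eq.intros)

lemma first_pair_mem_setA_tilde: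
  assumes H: "abelian_perm_group n H" and "long_cycle n \<notin> H" "2 \<le> n"
    and "Sn_eq n H ([i, j] @ v) (zword n @ u)"
  shows "[i, j] \<in> setA_tilde H"
proof -
  have "Sn_eq n (mirror_conj n H) (map (mirror n) (rev v) @ [mirror n j, mirror n i])
          (map (mirror n) (rev u) @ zword n)"
    using Sn_eq_mirror[OF assms(4)] by (simp add: map_mirror_rev_zword)
  then have "[mirror n j, mirror n i] \<in> setA n (mirror_conj n H)"
    using last_pair_mem_setA abelian_perm_group_mirror_conj[OF H]
      long_cycle_notin_mirror_conj[OF H \<open>long_cycle n \<notin> H\<close>] \<open>2 \<le> n\<close> by simp
  then obtain \<sigma> where "\<sigma> \<in> H"
    "mirror n j = mirror n (\<sigma> (mirror n (n - 1)))" "mirror n i = mirror n (\<sigma> (mirror n n))"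
    unfolding setA_def mirror_conj_def by auto
  then have "j = \<sigma> (mirror n (n - 1))" "i = \<sigma> (mirror n n)" by (metis mirror_mirror)+
  moreover have "mirror n (n - 1) = 2" "mirror n n = 1"
    using \<open>2 \<le> n\<close> unfolding mirror_def by auto
  ultimately show ?thesis unfolding setA_tilde_def using \<open>\<sigma> \<in> H\<close> by auto
qed

text \<open>The restriction i, j \<in> {1..n} only matters for
  n = 0, where the conclusion [i, j] \<in> setA 0 H would be false.\<close>
theorem lemma2p2:
  fixes n :: nat and H :: "(nat \<Rightarrow> nat) set"
  assumes "subgroup H (sym_group n)"
    and "\<forall>\<sigma>\<in>H. \<forall>\<tau>\<in>H. \<sigma> \<circ> \<tau> = \<tau> \<circ> \<sigma>"
    and "long_cycle n \<notin> H"
  shows "(stab H n = {id} \<longrightarrow>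
            (\<forall>w \<in> FM n. \<forall>i\<in>{1..n}. \<forall>j\<in>{1..n}.
               in_Sz n H (w @ [i, j]) \<longrightarrow> [i, j] \<in> setA n H))
       \<and> (stab H 1 = {id} \<longrightarrow>
            (\<forall>v \<in> FM n. \<forall>i\<in>{1..n}. \<forall>j\<in>{1..n}.
               in_zS n H ([i, j] @ v) \<longrightarrow> [i, j] \<in> setA_tilde H))"
proof -
  have H: "abelian_perm_group n H" using abelian_perm_groupI assms(1,2) by blast
  consider "n = 0" | "n = 1" | "2 \<le> n" by linarith
  then show ?thesis
  proof cases
    case 2
    then have "long_cycle n = id" by (auto simp: long_cycle_def)
    then show ?thesis using H assms(3) unfolding abelian_perm_group_def by simp
  next
    case 3
    then show ?thesis
      using last_pair_mem_setA[OF H assms(3)] first_pair_mem_setA_tilde[OF H assms(3)]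
      unfolding in_Sz_def in_zS_def by blast
  qed simp
qed

end
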